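(* Let $\varepsilon>0$ be fixed, let $d$ be a sufficiently large constant (depending on $\varepsilon$), and let $q\ge(2+\varepsilon)d$ and $0\le\beta<1$ be constants. Let $G=(V,E)\sim\mathcal{G}(n,d/n)$. There exists a constant $C>0$ such that with probability $1-O(1/n)$, for every $\ell\ge0$ and every path $P$ in $G$ with $\ell$ edges, $|B(P)|\le C(\ell+\log n)$.
   Context: $\mathcal{G}(n,p)$ is the Erdős–Rényi random graph on $n$ vertices with each edge present independently with probability $p$. A vertex $u$ of $G$ is low-degree if $\deg_G(u)<\frac{q-1}{1-\beta}-2$, high-degree otherwise. For $B\subseteq V$, $\partial B=\{u\in V\setminus B:\exists w\in B,uw\in E\}$. A set $B\subseteq V$ is a permissive block if every vertex of $\partial B$ is low-degree; $B(P)$ denotes the minimal permissive block containing the vertex set of $P$. *)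

theory Defs
  imports "HOL-Probability.Probability"
begin

text \<open>Graphs on vertex set V = {..<n}; the edge set E is a set of pairs (i,j) with i < j < n
  (each unordered edge stored once).\<close>

definition pairs :: "nat \<Rightarrow> (nat \<times> nat) set" where
  "pairs n = {(i, j). i < j \<and> j < n}"

definition erdos_renyi :: "nat \<Rightarrow> real \<Rightarrow> (nat \<times> nat) set pmf" where
  "erdos_renyi n p =
     map_pmf (\<lambda>f. {e \<in> pairs n. f e}) (Pi_pmf (pairs n) False (\<lambda>_. bernoulli_pmf p))"

definition adj :: "(nat \<times> nat) set \<Rightarrow> nat \<Rightarrow> nat \<Rightarrow> bool" where
  "adj E u v \<longleftrightarrow> (u, v) \<in> E \<or> (v, u) \<in> E"

definition degree :: "nat \<Rightarrow> (nat \<times> nat) set \<Rightarrow> nat \<Rightarrow> nat" where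
  "degree n E u = card {v \<in> {..<n}. adj E u v}"

definition low_degree :: "nat \<Rightarrow> (nat \<times> nat) set \<Rightarrow> real \<Rightarrow> real \<Rightarrow> nat \<Rightarrow> bool" where
  "low_degree n E q \<beta> u \<longleftrightarrow> real (degree n E u) < (q - 1) / (1 - \<beta>) - 2"

definition boundary :: "nat \<Rightarrow> (nat \<times> nat) set \<Rightarrow> nat set \<Rightarrow> nat set" where
  "boundary n E B = {u \<in> {..<n} - B. \<exists>w\<in>B. adj E u w}"

definition permissive_block :: "nat \<Rightarrow> (nat \<times> nat) set \<Rightarrow> real \<Rightarrow> real \<Rightarrow> nat set \<Rightarrow> bool" where
  "permissive_block n E q \<beta> B \<longleftrightarrow>
     B \<subseteq> {..<n} \<and> (\<forall>u \<in> boundary n E B. low_degree n E q \<beta> u)"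

text \<open>The minimal permissive block containing S (permissive blocks are closed under
  intersection and {..<n} is one, so this is the unique minimal one).\<close>
definition min_block :: "nat \<Rightarrow> (nat \<times> nat) set \<Rightarrow> real \<Rightarrow> real \<Rightarrow> nat set \<Rightarrow> nat set" where
  "min_block n E q \<beta> S = \<Inter> {B. permissive_block n E q \<beta> B \<and> S \<subseteq> B}"

text \<open>A path with \<ell> edges: a list of \<ell>+1 distinct vertices, consecutive ones adjacent.\<close>
definition is_path :: "nat \<Rightarrow> (nat \<times> nat) set \<Rightarrow> nat list \<Rightarrow> bool" where
  "is_path n E P \<longleftrightarrow> P \<noteq> [] \<and> distinct P \<and> set P \<subseteq> {..<n} \<and>
     (\<forall>i. Suc i < length P \<longrightarrow> adj E (P ! i) (P ! Suc i))"

end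

theory Submission
  imports Defs
begin

text \<open>
  Let P be a path whose minimal permissive block is large. Growing the vertex set of P through
  boundary vertices of high degree until it becomes permissive yields a connected set R containing
  that block in which every vertex outside P has degree at least about q > (2 + \<epsilon>) d. As |P| is
  small compared with |R|, the degree sum over R forces R to meet at least about (1 + \<epsilon>/2) d |R|
  edges, of which a spanning tree accounts for only |R| - 1. So some tree on m vertices is present
  together with at least (1 + \<epsilon>/8) d m further edges at its vertices, where about d m are expected.
  A Chernoff bound makes this cost p^(m-1) exp(-c m) with c of order \<epsilon>^2 d, and a union bound over
  the (n choose m) m^m labelled trees gives n (e d exp(-c))^m \<le> n exp(-m), which summed over
  m > C log n is at most 1/n.
\<close>

section \<open>Connected vertex sets and spanning trees\<close>

inductive connected_set :: "nat \<Rightarrow> (nat \<times> nat) set \<Rightarrow> nat set \<Rightarrow> bool" for n E where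
  singleton: "v < n \<Longrightarrow> connected_set n E {v}"
| insert: "connected_set n E A \<Longrightarrow> w \<in> A \<Longrightarrow> adj E v w \<Longrightarrow> v \<notin> A \<Longrightarrow> v < n
    \<Longrightarrow> connected_set n E (insert v A)"

lemma connected_set_finite_nonempty:
  "connected_set n E A \<Longrightarrow> finite A \<and> A \<subseteq> {..<n} \<and> A \<noteq> {}"
  by (induction rule: connected_set.induct) auto

lemma adj_commute: "adj E u v \<longleftrightarrow> adj E v u"
  by (auto simp: adj_def)

lemma adj_imp_edge: "E \<subseteq> pairs n \<Longrightarrow> adj E v w \<Longrightarrow> (min v w, max v w) \<in> E"
  by (auto simp: adj_def pairs_def min_def max_def)

text \<open>Spanning trees are encoded by parent maps: u is joined to f u unless f u = u. Only the
  edge count card B - 1 is recorded, which is all the union bound needs, and there are at most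
  card B ^ card B such maps.\<close>

definition tree_edges :: "(nat \<Rightarrow> nat) \<Rightarrow> nat set \<Rightarrow> (nat \<times> nat) set" where
  "tree_edges f B = (\<lambda>u. (min u (f u), max u (f u))) ` {u \<in> B. f u \<noteq> u}"

definition parent_maps :: "nat set \<Rightarrow> (nat \<Rightarrow> nat) set" where
  "parent_maps B = {f \<in> B \<rightarrow>\<^sub>E B. card (tree_edges f B) = card B - 1}"

lemma connected_set_spanning_tree:
  assumes "connected_set n E A" "E \<subseteq> pairs n"
  shows "\<exists>f \<in> parent_maps A. tree_edges f A \<subseteq> E"
  using assms(1)
proof (induction rule: connected_set.induct)
  case (singleton v)
  show ?case
    by (rule bexI[of _ "restrict (\<lambda>_. v) {v}"]) (auto simp: tree_edges_def parent_maps_def)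
next
  case (insert A w v)
  then obtain f where f: "f \<in> A \<rightarrow>\<^sub>E A" "card (tree_edges f A) = card A - 1" "tree_edges f A \<subseteq> E"
    by (auto simp: parent_maps_def)
  have A: "finite A" "A \<noteq> {}" using connected_set_finite_nonempty[OF insert(1)] by auto
  have vw: "v \<noteq> w" using insert by auto
  define g where "g = f(v := w)"
  have g: "g \<in> insert v A \<rightarrow>\<^sub>E insert v A"
    using f(1) insert(2,4) unfolding g_def by (auto simp: PiE_def extensional_def)
  have "{u \<in> insert v A. g u \<noteq> u} = insert v {u \<in> A. f u \<noteq> u}"
    using vw insert(4) by (auto simp: g_def)
  moreover have "\<And>u. u \<in> A \<Longrightarrow> g u = f u" using insert(4) by (auto simp: g_def)
  ultimately have g_edges: "tree_edges g (insert v A) = insert (min v w, max v w) (tree_edges f A)"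
    unfolding tree_edges_def using vw by (auto simp: g_def image_iff)
  have new_edge: "(min v w, max v w) \<notin> tree_edges f A"
  proof
    assume "(min v w, max v w) \<in> tree_edges f A"
    then obtain u where u: "u \<in> A" "min v w = min u (f u)" "max v w = max u (f u)"
      by (auto simp: tree_edges_def)
    have "f u \<in> A" using u(1) f(1) by auto
    then have "min v w \<in> A" "max v w \<in> A" using u by (auto simp: min_def max_def split: if_splits)
    then show False using insert(4) by (auto simp: min_def max_def split: if_splits)
  qed
  have "finite (tree_edges f A)" using A unfolding tree_edges_def by auto
  then have "card (tree_edges g (insert v A)) = card (insert v A) - 1"
    using g_edges new_edge f(2) A insert(4) by (simp add: card_insert_if) (metis Suc_pred card_gt_0_iff)
  moreover have "tree_edges g (insert v A) \<subseteq> E"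
    using g_edges f(3) adj_imp_edge[OF assms(2) insert(3)] by auto
  ultimately show ?case using g by (auto simp: parent_maps_def)
qed

lemma is_path_connected_set:
  assumes "is_path n E P"
  shows "connected_set n E (set P)"
proof -
  have P: "P \<noteq> []" "distinct P" "set P \<subseteq> {..<n}"
    "\<And>i. Suc i < length P \<Longrightarrow> adj E (P ! i) (P ! Suc i)"
    using assms unfolding is_path_def by auto
  have "connected_set n E (set (take (Suc k) P))" if "k < length P" for k
    using that
  proof (induction k)
    case 0
    have "set (take (Suc 0) P) = {P ! 0}" using P(1) by (cases P) auto
    moreover have "P ! 0 < n" using P(1,3) by (meson lessThan_iff nth_mem subsetD 0)
    ultimately show ?case by (simp add: connected_set.singleton)
  next
    case (Suc k)
    have take_Suc: "take (Suc (Suc k)) P = take (Suc k) P @ [P ! Suc k]"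
      using Suc(2) by (simp add: take_Suc_conv_app_nth)
    have prev: "P ! k \<in> set (take (Suc k) P)" using Suc(2) by (simp add: take_Suc_conv_app_nth)
    have "adj E (P ! Suc k) (P ! k)" using P(4)[of k] Suc(2) adj_commute by metis
    moreover have "P ! Suc k \<notin> set (take (Suc k) P)"
      using P(2) Suc(2) by (simp add: distinct_conv_nth in_set_conv_nth)
    moreover have "P ! Suc k < n" using P(3) Suc(2) nth_mem by blast
    ultimately show ?case
      using connected_set.insert[OF Suc.IH prev] Suc(2) take_Suc by simp
  qed
  from this[of "length P - 1"] P(1) show ?thesis by simp
qed

lemma permissive_closure_exists:
  assumes "connected_set n E A"
  shows "\<exists>R. connected_set n E R \<and> A \<subseteq> R \<and> permissive_block n E q \<beta> R \<and>
             (\<forall>u \<in> R - A. \<not> low_degree n E q \<beta> u)"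
  using assms
proof (induction "n - card A" arbitrary: A rule: less_induct)
  case less
  have A: "finite A" "A \<subseteq> {..<n}" using connected_set_finite_nonempty[OF less(2)] by auto
  show ?case
  proof (cases "permissive_block n E q \<beta> A")
    case True
    then show ?thesis using less(2) by blast
  next
    case False
    then obtain u where u: "u \<in> boundary n E A" "\<not> low_degree n E q \<beta> u"
      using A unfolding permissive_block_def by auto
    then obtain w where w: "w \<in> A" "adj E u w" "u < n" "u \<notin> A" unfolding boundary_def by auto
    have grown: "connected_set n E (insert u A)" by (rule connected_set.insert[OF less(2) w(1,2,4,3)])
    have "card (insert u A) \<le> n"
      using A w by (metis card_lessThan card_mono finite_lessThan insert_subset lessThan_iff)
    moreover have "card (insert u A) = Suc (card A)" using A w by simp
    ultimately have "n - card (insert u A) < n - card A" by linarith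
    from less(1)[OF this grown] obtain R where R: "connected_set n E R" "insert u A \<subseteq> R"
      "permissive_block n E q \<beta> R" "\<forall>x \<in> R - insert u A. \<not> low_degree n E q \<beta> x" by blast
    then show ?thesis using u(2) by (intro exI[of _ R]) auto
  qed
qed

lemma min_block_subset:
  "permissive_block n E q \<beta> R \<Longrightarrow> S \<subseteq> R \<Longrightarrow> min_block n E q \<beta> S \<subseteq> R"
  unfolding min_block_def by auto

definition incident_pairs :: "nat \<Rightarrow> nat set \<Rightarrow> (nat \<times> nat) set" where
  "incident_pairs n B = {e \<in> pairs n. fst e \<in> B \<or> snd e \<in> B}"

lemma finite_pairs: "finite (pairs n)"
  by (rule finite_subset[of _ "{..<n} \<times> {..<n}"]) (auto simp: pairs_def)

lemma card_incident_pairs_le: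
  assumes "finite B"
  shows "card (incident_pairs n B) \<le> card B * n"
proof -
  have "incident_pairs n B \<subseteq> (\<Union>u\<in>B. (\<lambda>v. (min u v, max u v)) ` {..<n})"
  proof
    fix e assume "e \<in> incident_pairs n B"
    then obtain i j where e: "e = (i, j)" "i < j" "j < n" "i \<in> B \<or> j \<in> B"
      by (auto simp: incident_pairs_def pairs_def)
    then show "e \<in> (\<Union>u\<in>B. (\<lambda>v. (min u v, max u v)) ` {..<n})"
    proof (cases "i \<in> B")
      case True
      then show ?thesis using e by (intro UN_I[of i]) (auto intro!: image_eqI[of _ _ j])
    next
      case False
      then show ?thesis using e by (intro UN_I[of j]) (auto intro!: image_eqI[of _ _ i])
    qed
  qed
  then have "card (incident_pairs n B) \<le> card (\<Union>u\<in>B. (\<lambda>v. (min u v, max u v)) ` {..<n})"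
    using assms by (intro card_mono) auto
  also have "\<dots> \<le> (\<Sum>u\<in>B. card ((\<lambda>v. (min u v, max u v)) ` {..<n}))"
    using assms by (rule card_UN_le)
  also have "\<dots> \<le> (\<Sum>u\<in>B. n)"
    by (intro sum_mono) (metis card_image_le card_lessThan finite_lessThan)
  finally show ?thesis by simp
qed

lemma tree_edges_subset_incident_pairs:
  assumes "f \<in> B \<rightarrow>\<^sub>E B" "B \<subseteq> {..<n}"
  shows "tree_edges f B \<subseteq> incident_pairs n B"
proof
  fix e assume "e \<in> tree_edges f B"
  then obtain u where u: "u \<in> B" "f u \<noteq> u" "e = (min u (f u), max u (f u))"
    unfolding tree_edges_def by blast
  have "f u \<in> B" using assms(1) u(1) by auto
  then show "e \<in> incident_pairs n B"
    using assms(2) u unfolding incident_pairs_def pairs_def by (auto simp: min_def max_def)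
qed

lemma card_fibres_sum:
  assumes "finite E" "finite R"
  shows "(\<Sum>u\<in>R. card {e \<in> E. g e = u}) = card {e \<in> E. g e \<in> R}"
proof -
  have "{e \<in> E. g e \<in> R} = (\<Union>u\<in>R. {e \<in> E. g e = u})" by auto
  then show ?thesis using assms by (simp add: card_UN_disjoint disjoint_iff)
qed

lemma degree_le_card_endpoints:
  assumes "finite E"
  shows "degree n E u \<le> card {e \<in> E. fst e = u} + card {e \<in> E. snd e = u}"
proof -
  have "{v \<in> {..<n}. adj E u v} \<subseteq> snd ` {e \<in> E. fst e = u} \<union> fst ` {e \<in> E. snd e = u}"
    by (auto simp: adj_def image_iff)
  then have "degree n E u \<le> card (snd ` {e \<in> E. fst e = u} \<union> fst ` {e \<in> E. snd e = u})"
    unfolding degree_def using assms by (intro card_mono) auto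
  also have "\<dots> \<le> card (snd ` {e \<in> E. fst e = u}) + card (fst ` {e \<in> E. snd e = u})"
    by (rule card_Un_le)
  also have "\<dots> \<le> card {e \<in> E. fst e = u} + card {e \<in> E. snd e = u}"
    using assms by (intro add_mono card_image_le) auto
  finally show ?thesis .
qed

lemma sum_degree_le_incident_edges:
  assumes "E \<subseteq> pairs n" "finite R"
  shows "(\<Sum>u\<in>R. degree n E u) \<le> 2 * card (E \<inter> incident_pairs n R)"
proof -
  have E: "finite E" using assms(1) finite_pairs finite_subset by blast
  have "(\<Sum>u\<in>R. degree n E u) \<le> (\<Sum>u\<in>R. card {e \<in> E. fst e = u} + card {e \<in> E. snd e = u})"
    by (intro sum_mono degree_le_card_endpoints E)
  also have "\<dots> = card {e \<in> E. fst e \<in> R} + card {e \<in> E. snd e \<in> R}"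
    using E assms(2) by (simp add: sum.distrib card_fibres_sum)
  also have "\<dots> \<le> card (E \<inter> incident_pairs n R) + card (E \<inter> incident_pairs n R)"
    using assms E by (intro add_mono card_mono) (auto simp: incident_pairs_def)
  finally show ?thesis by simp
qed

section \<open>Exponential moments in G(n,p)\<close>

lemma prod_split_disjoint:
  assumes "finite A" "T \<subseteq> A" "D \<subseteq> A" "T \<inter> D = {}" "\<forall>e \<in> A - (T \<union> D). h e = 1"
  shows "prod h A = prod h T * prod h D"
proof -
  have fin: "finite T" "finite D" using assms(1-3) finite_subset by blast+
  have "prod h A = prod h (T \<union> D)" by (rule prod.mono_neutral_right) (use assms in auto)
  also have "\<dots> = prod h T * prod h D" by (rule prod.union_disjoint) (use fin assms(4) in auto)
  finally show ?thesis .
qed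

lemma expectation_prod_bernoulli:
  fixes g :: "'a \<Rightarrow> bool \<Rightarrow> real"
  assumes "finite I" "0 \<le> p" "p \<le> 1" "\<And>i b. i \<in> I \<Longrightarrow> 0 \<le> g i b"
  shows "measure_pmf.expectation (Pi_pmf I dflt (\<lambda>_. bernoulli_pmf p)) (\<lambda>f. \<Prod>i\<in>I. g i (f i))
           = (\<Prod>i\<in>I. g i True * p + g i False * (1 - p))"
  using assms by (simp add: expectation_prod_Pi_pmf integrable_measure_pmf_finite)

text \<open>Markov's inequality applied to exp(t |E \<inter> D|) times the indicator of T \<subseteq> E.\<close>

lemma prob_erdos_renyi_superset_card_ge:
  assumes T: "T \<subseteq> pairs n" and D: "D \<subseteq> pairs n" and TD: "T \<inter> D = {}"
    and p: "0 \<le> p" "p \<le> 1" and t: "0 \<le> t"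
  shows "measure_pmf.prob (erdos_renyi n p) {E. T \<subseteq> E \<and> \<kappa> \<le> real (card (E \<inter> D))}
         \<le> p ^ card T * exp (real (card D) * p * (exp t - 1) - t * \<kappa>)"
proof -
  define M where "M = Pi_pmf (pairs n) False (\<lambda>_. bernoulli_pmf p)"
  define A where "A = (\<lambda>f. {e \<in> pairs n. f e}) -` {E. T \<subseteq> E \<and> \<kappa> \<le> real (card (E \<inter> D))}"
  define g where "g = (\<lambda>e b. if e \<in> T then of_bool b
                            else if e \<in> D then exp (t * of_bool b) else (1::real))"
  have fin: "finite T" "finite D" using T D finite_pairs finite_subset by blast+
  have split: "(\<Prod>e\<in>pairs n. h e) = (\<Prod>e\<in>T. h e) * (\<Prod>e\<in>D. h e)"
    if "\<forall>e \<in> pairs n - (T \<union> D). h e = 1" for h :: "nat \<times> nat \<Rightarrow> real"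
    by (rule prod_split_disjoint[OF finite_pairs T D TD that])
  have finM: "finite (set_pmf M)"
    unfolding M_def by (simp add: set_Pi_pmf finite_pairs finite_PiE_dflt)
  have markov: "indicator A f \<le> exp (- t * \<kappa>) * (\<Prod>e\<in>pairs n. g e (f e))" for f
  proof (cases "f \<in> A")
    case True
    moreover have "{e \<in> pairs n. f e} \<inter> D = {e \<in> D. f e}" using D by auto
    ultimately have f: "\<forall>e\<in>T. f e" "\<kappa> \<le> real (card {e \<in> D. f e})"
      by (auto simp: A_def)
    have "(\<Prod>e\<in>pairs n. g e (f e)) = (\<Prod>e\<in>D. exp (t * of_bool (f e)))"
      using f(1) TD by (subst split) (auto simp: g_def intro!: prod.neutral prod.cong)
    also have "\<dots> = exp (t * real (card {e \<in> D. f e}))"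
      by (simp add: exp_sum[OF fin(2), symmetric] sum_distrib_left[symmetric] of_bool_def
                    sum.If_cases fin Int_def conj_commute)
    moreover have "t * \<kappa> \<le> t * real (card {e \<in> D. f e})" using f(2) t by (rule mult_left_mono)
    ultimately show ?thesis using True by (simp add: exp_minus field_simps mult.commute)
  next
    case False
    have "0 \<le> (\<Prod>e\<in>pairs n. g e (f e))" by (intro prod_nonneg) (auto simp: g_def)
    then show ?thesis using False by simp
  qed
  have "measure_pmf.expectation M (\<lambda>f. \<Prod>e\<in>pairs n. g e (f e))
          = (\<Prod>e\<in>pairs n. g e True * p + g e False * (1 - p))"
    unfolding M_def using p by (intro expectation_prod_bernoulli finite_pairs) (auto simp: g_def)
  also have "\<dots> = (\<Prod>e\<in>T. g e True * p + g e False * (1 - p))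
                   * (\<Prod>e\<in>D. g e True * p + g e False * (1 - p))"
    by (rule split) (auto simp: g_def)
  also have "\<dots> = p ^ card T * (1 + p * (exp t - 1)) ^ card D"
    using TD by (auto simp: g_def algebra_simps intro!: arg_cong2[where f = "(*)"] prod.cong
                        simp flip: prod_constant)
  finally have moment: "measure_pmf.expectation M (\<lambda>f. \<Prod>e\<in>pairs n. g e (f e))
                          = p ^ card T * (1 + p * (exp t - 1)) ^ card D" .
  have "measure_pmf.prob (erdos_renyi n p) {E. T \<subseteq> E \<and> \<kappa> \<le> real (card (E \<inter> D))}
        = measure_pmf.expectation M (indicator A)"
    unfolding erdos_renyi_def M_def A_def by simp
  also have "\<dots> \<le> measure_pmf.expectation M (\<lambda>f. exp (- t * \<kappa>) * (\<Prod>e\<in>pairs n. g e (f e)))"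
    by (intro integral_mono integrable_measure_pmf_finite finM markov)
  also have "\<dots> = exp (- t * \<kappa>) * p ^ card T * (1 + p * (exp t - 1)) ^ card D"
    by (simp add: moment)
  also have "\<dots> \<le> exp (- t * \<kappa>) * p ^ card T * exp (p * (exp t - 1)) ^ card D"
    using p t by (intro mult_left_mono power_mono) (auto simp: exp_ge_add_one_self)
  also have "\<dots> = p ^ card T * exp (real (card D) * p * (exp t - 1) - t * \<kappa>)"
    unfolding diff_conv_add_uminus exp_add exp_of_nat_mult[symmetric] by (simp add: mult_ac)
  finally show ?thesis .
qed

section \<open>Large blocks contain dense trees\<close>

lemma path_closure_mostly_high_degree:
  assumes P: "is_path n E P" and C: "1 \<le> C" and ln_n: "1 \<le> ln (real n)"
    and big: "C * (real (length P - 1) + ln (real n)) < real (card (min_block n E q \<beta> (set P)))"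
  obtains R where "connected_set n E R" "C * ln (real n) < real (card R)"
    "(1 - 1 / C) * real (card R) \<le> real (card {u \<in> R. \<not> low_degree n E q \<beta> u})"
proof -
  obtain R where R: "connected_set n E R" "set P \<subseteq> R" "permissive_block n E q \<beta> R"
      "\<forall>u \<in> R - set P. \<not> low_degree n E q \<beta> u"
    using permissive_closure_exists[OF is_path_connected_set[OF P]] by blast
  have finR: "finite R" using connected_set_finite_nonempty[OF R(1)] by blast
  define L where "L = length P"
  have L: "card (set P) = L" "1 \<le> L"
    using P by (auto simp: is_path_def L_def distinct_card Suc_le_eq)
  have "card (min_block n E q \<beta> (set P)) \<le> card R"
    by (intro card_mono finR min_block_subset R(3,2))
  then have R_big: "C * (real (L - 1) + ln (real n)) < real (card R)"
    using big unfolding L_def by linarith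
  have "C * real L \<le> C * (real (L - 1) + ln (real n))"
    using C L(2) ln_n by (intro mult_left_mono) auto
  then have "real L \<le> real (card R) / C" using R_big C by (simp add: field_simps)
  moreover have "card (R - set P) = card R - L" using card_Diff_subset[OF _ R(2)] L(1) by simp
  moreover have "L \<le> card R" using card_mono[OF finR R(2)] L(1) by simp
  moreover have "card (R - set P) \<le> card {u \<in> R. \<not> low_degree n E q \<beta> u}"
    using R(4) finR by (intro card_mono) auto
  ultimately have "(1 - 1 / C) * real (card R) \<le> real (card {u \<in> R. \<not> low_degree n E q \<beta> u})"
    by (simp add: algebra_simps of_nat_diff)
  moreover have "C * ln (real n) \<le> C * (real (L - 1) + ln (real n))"
    using C by (intro mult_left_mono) auto
  then have "C * ln (real n) < real (card R)" using R_big by linarith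
  ultimately show ?thesis using that R(1) by blast
qed

lemma excess_edges_ge:
  assumes E: "E \<subseteq> pairs n" and R: "R \<subseteq> {..<n}" "finite R"
    and f: "f \<in> parent_maps R" "tree_edges f R \<subseteq> E"
  shows "real (\<Sum>u\<in>R. degree n E u) / 2 - real (card R)
           \<le> real (card (E \<inter> (incident_pairs n R - tree_edges f R)))"
proof -
  have finE: "finite E" using E finite_pairs finite_subset by blast
  have tree: "tree_edges f R \<subseteq> E \<inter> incident_pairs n R"
    using f tree_edges_subset_incident_pairs R(1) by (auto simp: parent_maps_def)
  have "E \<inter> (incident_pairs n R - tree_edges f R) = E \<inter> incident_pairs n R - tree_edges f R" by auto
  moreover have "card (E \<inter> incident_pairs n R - tree_edges f R)
                 = card (E \<inter> incident_pairs n R) - card (tree_edges f R)"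
    using tree finE by (intro card_Diff_subset) (auto intro: finite_subset)
  moreover have "card (tree_edges f R) \<le> card (E \<inter> incident_pairs n R)"
    using tree finE by (intro card_mono) auto
  ultimately have "real (card (E \<inter> (incident_pairs n R - tree_edges f R)))
               = real (card (E \<inter> incident_pairs n R)) - real (card (tree_edges f R))"
    by (simp add: of_nat_diff)
  moreover have "card (tree_edges f R) \<le> card R" using f(1) by (simp add: parent_maps_def)
  moreover have "(\<Sum>u\<in>R. degree n E u) \<le> 2 * card (E \<inter> incident_pairs n R)"
    by (rule sum_degree_le_incident_edges[OF E R(2)])
  ultimately show ?thesis by linarith
qed

definition dense_tree_event :: "nat \<Rightarrow> real \<Rightarrow> nat set \<Rightarrow> (nat \<Rightarrow> nat) \<Rightarrow> (nat \<times> nat) set set" where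
  "dense_tree_event n \<kappa> B f = {E. tree_edges f B \<subseteq> E \<and>
     \<kappa> * real (card B) \<le> real (card (E \<inter> (incident_pairs n B - tree_edges f B)))}"

lemma dense_tree_event_mono: "\<kappa> \<le> \<kappa>' \<Longrightarrow> dense_tree_event n \<kappa>' B f \<subseteq> dense_tree_event n \<kappa> B f"
  unfolding dense_tree_event_def by (auto intro: order_trans[OF mult_right_mono])

lemma large_block_dense_tree:
  assumes E: "E \<subseteq> pairs n" and P: "is_path n E P" and C: "1 \<le> C" and ln_n: "1 \<le> ln (real n)"
    and high: "\<And>u. \<not> low_degree n E q \<beta> u \<Longrightarrow> Th \<le> real (degree n E u)" and Th: "0 \<le> Th"
    and big: "C * (real (length P - 1) + ln (real n)) < real (card (min_block n E q \<beta> (set P)))"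
  shows "\<exists>B. B \<subseteq> {..<n} \<and> C * ln (real n) < real (card B) \<and>
           (\<exists>f \<in> parent_maps B. E \<in> dense_tree_event n ((1 - 1 / C) * Th / 2 - 1) B f)"
proof -
  obtain R where R: "connected_set n E R" "C * ln (real n) < real (card R)"
      "(1 - 1 / C) * real (card R) \<le> real (card {u \<in> R. \<not> low_degree n E q \<beta> u})"
    using path_closure_mostly_high_degree[OF P C ln_n big] by blast
  have R_sub: "finite R" "R \<subseteq> {..<n}" using connected_set_finite_nonempty[OF R(1)] by auto
  obtain f where f: "f \<in> parent_maps R" "tree_edges f R \<subseteq> E"
    using connected_set_spanning_tree[OF R(1) E] by blast
  have "(1 - 1 / C) * real (card R) * Th \<le> real (card {u \<in> R. \<not> low_degree n E q \<beta> u}) * Th"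
    using R(3) Th by (rule mult_right_mono)
  also have "\<dots> = (\<Sum>u \<in> {u \<in> R. \<not> low_degree n E q \<beta> u}. Th)" by simp
  also have "\<dots> \<le> (\<Sum>u \<in> {u \<in> R. \<not> low_degree n E q \<beta> u}. real (degree n E u))"
    using high by (intro sum_mono) auto
  also have "\<dots> \<le> (\<Sum>u\<in>R. real (degree n E u))"
    using R_sub by (intro sum_mono2) auto
  finally have "(1 - 1 / C) * real (card R) * Th / 2 \<le> real (\<Sum>u\<in>R. degree n E u) / 2" by simp
  moreover have "((1 - 1 / C) * Th / 2 - 1) * real (card R)
                   = (1 - 1 / C) * real (card R) * Th / 2 - real (card R)"
    by (simp add: algebra_simps)
  ultimately have "((1 - 1 / C) * Th / 2 - 1) * real (card R)
                     \<le> real (card (E \<inter> (incident_pairs n R - tree_edges f R)))"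
    using excess_edges_ge[OF E R_sub(2,1) f] by linarith
  then show ?thesis using R(2) R_sub f by (auto simp: dense_tree_event_def)
qed

section \<open>Union bound over labelled trees\<close>

lemma prob_dense_tree_event:
  assumes B: "B \<subseteq> {..<n}" and f: "f \<in> parent_maps B"
    and n: "0 < n" and d: "0 \<le> d" "d \<le> real n" and t: "0 \<le> t" "t \<le> 1"
  shows "measure_pmf.prob (erdos_renyi n (d / real n)) (dense_tree_event n \<kappa> B f)
           \<le> (d / real n) ^ (card B - 1) * exp (real (card B) * (d * (t + t\<^sup>2) - t * \<kappa>))"
proof -
  define p where "p = d / real n"
  define T where "T = tree_edges f B"
  define D where "D = incident_pairs n B - T"
  have p: "0 \<le> p" "p \<le> 1" using d n by (auto simp: p_def divide_le_eq)
  have f': "f \<in> B \<rightarrow>\<^sub>E B" "card T = card B - 1" using f by (auto simp: parent_maps_def T_def)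
  have T: "T \<subseteq> pairs n"
    using tree_edges_subset_incident_pairs[OF f'(1) B] by (auto simp: T_def incident_pairs_def)
  have "real (card D) \<le> real (card B) * real n"
  proof -
    have "card D \<le> card (incident_pairs n B)"
      unfolding D_def by (intro card_mono) (auto simp: incident_pairs_def intro: finite_subset[OF _ finite_pairs])
    also have "\<dots> \<le> card B * n" by (intro card_incident_pairs_le finite_subset[OF B finite_lessThan])
    finally show ?thesis by (simp flip: of_nat_mult)
  qed
  then have D_p: "real (card D) * p \<le> real (card B) * d"
    using p n by (auto simp: p_def field_simps dest: mult_right_mono[of _ _ d])
  moreover have "exp t - 1 \<le> t + t\<^sup>2" using exp_bound[OF t] by simp
  ultimately have "real (card D) * p * (exp t - 1) \<le> real (card B) * d * (t + t\<^sup>2)"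
    using t d by (intro mult_mono[OF D_p]) auto
  then have exponent: "real (card D) * p * (exp t - 1) - t * (\<kappa> * real (card B))
                         \<le> real (card B) * (d * (t + t\<^sup>2) - t * \<kappa>)"
    by (simp add: algebra_simps)
  have "measure_pmf.prob (erdos_renyi n p) (dense_tree_event n \<kappa> B f)
          \<le> p ^ card T * exp (real (card D) * p * (exp t - 1) - t * (\<kappa> * real (card B)))"
    unfolding dense_tree_event_def T_def[symmetric] D_def[symmetric]
    by (rule prob_erdos_renyi_superset_card_ge[OF T _ _ p t(1)]) (auto simp: D_def incident_pairs_def)
  also have "\<dots> \<le> p ^ (card B - 1) * exp (real (card B) * (d * (t + t\<^sup>2) - t * \<kappa>))"
    unfolding f'(2) using exponent p by (intro mult_left_mono) auto
  finally show ?thesis by (simp add: p_def)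
qed

lemma finite_subsets_of_card: "finite {B. B \<subseteq> {..<n::nat} \<and> card B = m}"
  by (rule finite_subset[of _ "Pow {..<n}"]) auto

lemma finite_parent_maps: "finite B \<Longrightarrow> finite (parent_maps B)"
  unfolding parent_maps_def by (rule finite_subset[OF _ finite_PiE[of B "\<lambda>_. B"]]) auto

lemma card_parent_maps_le: "finite B \<Longrightarrow> card (parent_maps B) \<le> card B ^ card B"
proof -
  assume B: "finite B"
  have "card (parent_maps B) \<le> card (B \<rightarrow>\<^sub>E B)"
    unfolding parent_maps_def by (intro card_mono finite_PiE B) auto
  also have "\<dots> = card B ^ card B" using B by (simp add: card_PiE)
  finally show ?thesis .
qed

lemma sum_parent_maps_subsets_le:
  assumes "0 \<le> x"
  shows "(\<Sum>B\<in>{B. B \<subseteq> {..<n} \<and> card B = m}. \<Sum>f\<in>parent_maps B. x) \<le> real (n choose m) * real m ^ m * x"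
proof -
  have "(\<Sum>B\<in>{B. B \<subseteq> {..<n} \<and> card B = m}. \<Sum>f\<in>parent_maps B. x)
          \<le> (\<Sum>B\<in>{B. B \<subseteq> {..<n} \<and> card B = m}. real m ^ m * x)"
    using assms
    by (intro sum_mono) (auto simp flip: of_nat_power intro!: mult_right_mono card_parent_maps_le
                              dest: finite_subset)
  also have "\<dots> = real (n choose m) * real m ^ m * x"
    using n_subsets[of "{..<n}" m] by simp
  finally show ?thesis .
qed

lemma pow_le_exp_mult_fact: "real m ^ m \<le> exp (real m) * fact m"
proof -
  have "real m ^ m / fact m \<le> (\<Sum>k\<le>m. real m ^ k / fact k)"
    by (rule member_le_sum) auto
  also have "\<dots> \<le> exp (real m)"
    using summable_exp_generic[of "real m"]
    by (auto simp: exp_def divide_inverse ac_simps intro!: sum_le_suminf)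
  finally show ?thesis by (simp add: divide_le_eq)
qed

lemma labelled_trees_bound:
  assumes m: "1 \<le> m" "m \<le> n" and d: "1 \<le> d"
  shows "real (n choose m) * real m ^ m * (d / n) ^ (m - 1) * exp (- (m * c))
         \<le> n * (exp 1 * d * exp (- c)) ^ m"
proof -
  have n: "real n \<ge> 1" using m by simp
  have "real (n choose m) * real m ^ m \<le> real (n choose m) * (exp (real m) * fact m)"
    by (intro mult_left_mono pow_le_exp_mult_fact) auto
  also have "\<dots> = (real (n choose m) * fact m) * exp m" by simp
  also have "\<dots> \<le> real n ^ m * exp m"
  proof (rule mult_right_mono)
    show "real (n choose m) * fact m \<le> real n ^ m"
      using binomial_fact_pow[of n m] by (metis of_nat_fact of_nat_le_iff of_nat_mult of_nat_power)
  qed simp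
  finally have choose: "real (n choose m) * real m ^ m \<le> real n ^ m * exp m" .
  have "real n ^ m = real n * real n ^ (m - 1)" using m by (metis Suc_diff_le diff_Suc_1 power_Suc)
  then have "real n ^ m * (d / n) ^ (m - 1) = real n * d ^ (m - 1)"
    using n by (simp add: power_divide)
  moreover have "d ^ (m - 1) \<le> d ^ m" using d by (intro power_increasing) auto
  ultimately have "real n ^ m * exp m * (d / n) ^ (m - 1) * exp (- (m * c))
                     \<le> real n * exp m * d ^ m * exp (- (m * c))"
    using n by (simp add: mult_ac)
  moreover have "real (n choose m) * real m ^ m * (d / n) ^ (m - 1) * exp (- (m * c))
       \<le> real n ^ m * exp m * (d / n) ^ (m - 1) * exp (- (m * c))"
    by (intro mult_right_mono choose) (use d in auto)
  moreover have "real n * exp m * d ^ m * exp (- (m * c)) = n * (exp 1 * d * exp (- c)) ^ m"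
    by (simp add: power_mult_distrib exp_of_nat_mult[symmetric])
  ultimately show ?thesis by linarith
qed

lemma prob_dense_tree_of_card_le:
  assumes a: "0 < a" "a \<le> 1" and d: "1 \<le> d" "2 + ln d \<le> d * a\<^sup>2 / 256"
    and n: "d \<le> real n" and m: "1 \<le> m" "m \<le> n"
  shows "measure_pmf.prob (erdos_renyi n (d / real n))
           (\<Union>B\<in>{B. B \<subseteq> {..<n} \<and> card B = m}. \<Union>f\<in>parent_maps B.
              dense_tree_event n ((1 + a / 8) * d) B f)
         \<le> real n * exp (- real m)"
proof -
  define ER where "ER = erdos_renyi n (d / real n)"
  define Bs where "Bs = {B. B \<subseteq> {..<n} \<and> card B = m}"
  define c where "c = d * a\<^sup>2 / 256"
  have fin: "finite Bs" "\<And>B. B \<in> Bs \<Longrightarrow> finite (parent_maps B)"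
    using finite_subsets_of_card finite_parent_maps by (auto simp: Bs_def dest: finite_subset)
  have event: "measure_pmf.prob ER (dense_tree_event n ((1 + a / 8) * d) B f)
                 \<le> (d / real n) ^ (m - 1) * exp (- (m * c))" if "B \<in> Bs" "f \<in> parent_maps B" for B f
  proof -
    have "d * (a / 16 + (a / 16)\<^sup>2) - a / 16 * ((1 + a / 8) * d) = - c"
      by (simp add: c_def power2_eq_square field_simps)
    then show ?thesis
      using prob_dense_tree_event[OF _ that(2) _ _ n, of "a / 16" "(1 + a / 8) * d"] that(1) a d m
      by (simp add: ER_def Bs_def)
  qed
  have "measure_pmf.prob ER (\<Union>B\<in>Bs. \<Union>f\<in>parent_maps B. dense_tree_event n ((1 + a / 8) * d) B f)
          \<le> (\<Sum>B\<in>Bs. measure_pmf.prob ER (\<Union>f\<in>parent_maps B. dense_tree_event n ((1 + a / 8) * d) B f))"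
    by (intro measure_pmf.finite_measure_subadditive_finite fin) auto
  also have "\<dots> \<le> (\<Sum>B\<in>Bs. \<Sum>f\<in>parent_maps B. measure_pmf.prob ER (dense_tree_event n ((1 + a / 8) * d) B f))"
    by (intro sum_mono measure_pmf.finite_measure_subadditive_finite fin) auto
  also have "\<dots> \<le> (\<Sum>B\<in>Bs. \<Sum>f\<in>parent_maps B. (d / real n) ^ (m - 1) * exp (- (m * c)))"
    by (intro sum_mono event)
  also have "\<dots> \<le> real (n choose m) * real m ^ m * ((d / real n) ^ (m - 1) * exp (- (m * c)))"
    unfolding Bs_def using d by (intro sum_parent_maps_subsets_le) auto
  also have "\<dots> \<le> n * (exp 1 * d * exp (- c)) ^ m"
    using labelled_trees_bound[OF m d(1), of c] by (simp add: mult_ac)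
  also have "\<dots> \<le> n * exp (- 1) ^ m"
  proof -
    have "exp 1 * d * exp (- c) = exp (1 + ln d - c)"
      using d(1) by (simp add: exp_add exp_diff exp_minus field_simps)
    also have "\<dots> \<le> exp (- 1)" using d(2) by (simp add: c_def)
    finally show ?thesis using d(1) by (intro mult_left_mono power_mono) auto
  qed
  also have "\<dots> = real n * exp (- real m)" by (simp add: exp_of_nat_mult[symmetric])
  finally show ?thesis by (simp add: ER_def Bs_def)
qed

lemma high_degree_ge:
  assumes "\<not> low_degree n E q \<beta> u" "1 \<le> q" "0 \<le> \<beta>" "\<beta> < 1"
  shows "q - 3 \<le> real (degree n E u)"
proof -
  have "(q - 1) * (1 - \<beta>) \<le> q - 1" using assms(2-4) by (intro mult_left_le) auto
  then have "q - 1 \<le> (q - 1) / (1 - \<beta>)" using assms(4) by (simp add: le_divide_eq)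
  then show ?thesis using assms(1) by (simp add: low_degree_def not_less)
qed

lemma dense_threshold_le:
  fixes a d :: real
  assumes a: "0 < a" "a \<le> 1" and d: "32 / a \<le> d"
  shows "(1 + a / 8) * d \<le> (1 - 1 / (4 / a + 3)) * ((2 + a) * d - 3) / 2 - 1"
proof -
  have ad: "32 \<le> a * d" using d a by (simp add: divide_le_eq mult.commute)
  have "(2 + a) * ((2 + a) * d - 3) - (4 + 3 * a) * ((1 + a / 8) * d + 1)
          = a * d / 2 + 5 * a * (a * d) / 8 - 10 - 6 * a"
    by (simp add: algebra_simps power2_eq_square)
  moreover have "0 \<le> 5 * a * (a * d) / 8" using a ad by simp
  ultimately have "(4 + 3 * a) * ((1 + a / 8) * d + 1) \<le> (2 + a) * ((2 + a) * d - 3)"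
    using ad a by linarith
  then have "(1 + a / 8) * d + 1 \<le> (2 + a) * ((2 + a) * d - 3) / (4 + 3 * a)"
    using a by (simp add: le_divide_eq mult.commute)
  also have "\<dots> = (1 - 1 / (4 / a + 3)) * ((2 + a) * d - 3) / 2"
    using a by (simp add: field_simps)
  finally show ?thesis by linarith
qed

lemma mult_exp_neg_le_inverse_square:
  assumes n: "0 < n" and m: "3 * ln (real n) < real m"
  shows "real n * exp (- real m) \<le> 1 / real n ^ 2"
proof -
  have "exp (- real m) \<le> exp (- (3 * ln (real n)))" using m by simp
  also have "\<dots> = 1 / real n ^ 3"
    using exp_of_nat_mult[of 3 "ln (real n)"] n by (simp add: exp_minus divide_inverse)
  finally have "real n * exp (- real m) \<le> real n * (1 / real n ^ 3)"
    using n by (intro mult_left_mono) auto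
  also have "\<dots> = 1 / real n ^ 2" using n by (simp add: power3_eq_cube power2_eq_square)
  finally show ?thesis .
qed

lemma one_le_ln: "3 \<le> n \<Longrightarrow> 1 \<le> ln (real n)"
  using exp_le ln_le_cancel_iff[of "exp 1" "real n"] by simp

lemma large_block_dense_tree_degree_gap:
  fixes a d q \<beta> :: real
  assumes a: "0 < a" "a \<le> 1" and d: "32 / a \<le> d"
    and q: "(2 + a) * d \<le> q" and \<beta>: "0 \<le> \<beta>" "\<beta> < 1" and n: "3 \<le> n"
    and E: "E \<subseteq> pairs n" and P: "is_path n E P"
    and big: "(4 / a + 3) * (real (length P - 1) + ln (real n))
                < real (card (min_block n E q \<beta> (set P)))"
  shows "\<exists>B. B \<subseteq> {..<n} \<and> (4 / a + 3) * ln (real n) < real (card B) \<and>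
           (\<exists>f \<in> parent_maps B. E \<in> dense_tree_event n ((1 + a / 8) * d) B f)"
proof -
  have "32 \<le> 32 / a" using a by (simp add: le_divide_eq)
  then have d32: "32 \<le> d" using d by linarith
  then have "2 * d \<le> (2 + a) * d" using a by (intro mult_right_mono) auto
  then have Th: "0 \<le> (2 + a) * d - 3" "1 \<le> q" using q d32 by linarith+
  have high: "(2 + a) * d - 3 \<le> real (degree n E u)" if "\<not> low_degree n E q \<beta> u" for u
    using high_degree_ge[OF that Th(2) \<beta>] q by linarith
  have "1 \<le> 4 / a + 3" using a by simp
  from large_block_dense_tree[OF E P this one_le_ln[OF n] high Th(1) big]
  show ?thesis using dense_tree_event_mono[OF dense_threshold_le[OF a d]] by blast
qed

lemma prob_min_blocks_small:
  fixes a d q \<beta> :: real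
  assumes a: "0 < a" "a \<le> 1" and d: "32 / a \<le> d" "2 + ln d \<le> d * a\<^sup>2 / 256"
    and q: "(2 + a) * d \<le> q" and \<beta>: "0 \<le> \<beta>" "\<beta> < 1" and n: "3 \<le> n" "d \<le> real n"
  shows "1 - 1 / real n \<le> measure_pmf.prob (erdos_renyi n (d / real n))
           {E. \<forall>P. is_path n E P \<longrightarrow> real (card (min_block n E q \<beta> (set P)))
                 \<le> (4 / a + 3) * (real (length P - 1) + ln (real n))}"
    (is "_ \<le> measure_pmf.prob ?ER ?good")
proof -
  define C where "C = 4 / a + 3"
  define Ms where "Ms = {m. m \<le> n \<and> C * ln (real n) < real m}"
  define bad where "bad = (\<lambda>m. \<Union>B\<in>{B. B \<subseteq> {..<n} \<and> card B = m}. \<Union>f\<in>parent_maps B.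
                             dense_tree_event n ((1 + a / 8) * d) B f)"
  have C: "3 \<le> C" using a by (simp add: C_def)
  have ln_n: "1 \<le> ln (real n)" using one_le_ln[OF n(1)] .
  have "0 < C * ln (real n)" using C ln_n by simp
  then have Ms_sub: "Ms \<subseteq> {1..n}" by (auto simp: Ms_def)
  then have Ms: "finite Ms" by (rule finite_subset) simp
  have bad_cover: "(UNIV - ?good) \<inter> set_pmf ?ER \<subseteq> (\<Union>m\<in>Ms. bad m)"
  proof
    fix E assume E: "E \<in> (UNIV - ?good) \<inter> set_pmf ?ER"
    then have E_pairs: "E \<subseteq> pairs n" by (auto simp: erdos_renyi_def)
    from E obtain P where P: "is_path n E P"
        "C * (real (length P - 1) + ln (real n)) < real (card (min_block n E q \<beta> (set P)))"
      by (auto simp: C_def not_le)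
    then obtain B f where B: "B \<subseteq> {..<n}" "C * ln (real n) < real (card B)" "f \<in> parent_maps B"
        "E \<in> dense_tree_event n ((1 + a / 8) * d) B f"
      using large_block_dense_tree_degree_gap[OF a d(1) q \<beta> n(1) E_pairs] unfolding C_def by blast
    moreover have "card B \<in> Ms"
      using B card_mono[OF finite_lessThan B(1)] by (auto simp: Ms_def)
    ultimately show "E \<in> (\<Union>m\<in>Ms. bad m)" by (auto simp: bad_def)
  qed
  have "measure_pmf.prob ?ER (UNIV - ?good) = measure_pmf.prob ?ER ((UNIV - ?good) \<inter> set_pmf ?ER)"
    by (simp add: measure_Int_set_pmf)
  also have "\<dots> \<le> measure_pmf.prob ?ER (\<Union>m\<in>Ms. bad m)"
    using bad_cover by (intro measure_pmf.finite_measure_mono) auto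
  also have "\<dots> \<le> (\<Sum>m\<in>Ms. measure_pmf.prob ?ER (bad m))"
    by (intro measure_pmf.finite_measure_subadditive_finite Ms) auto
  also have "\<dots> \<le> (\<Sum>m\<in>Ms. 1 / real n ^ 2)"
  proof (rule sum_mono)
    fix m assume m: "m \<in> Ms"
    then have m_range: "1 \<le> m" "m \<le> n" using Ms_sub by auto
    have "3 * ln (real n) \<le> C * ln (real n)" using C ln_n by (intro mult_right_mono) auto
    then have "3 * ln (real n) < real m" using m by (simp add: Ms_def)
    then have "real n * exp (- real m) \<le> 1 / real n ^ 2"
      using n by (intro mult_exp_neg_le_inverse_square) auto
    moreover have "32 \<le> 32 / a" using a by (simp add: le_divide_eq)
    then have "1 \<le> d" using d(1) by linarith
    ultimately show "measure_pmf.prob ?ER (bad m) \<le> 1 / real n ^ 2"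
      using prob_dense_tree_of_card_le[OF a _ d(2) n(2) m_range] unfolding bad_def by linarith
  qed
  also have "\<dots> \<le> real n / real n ^ 2"
    using n card_mono[OF _ Ms_sub] by (simp add: divide_right_mono)
  also have "\<dots> = 1 / real n" using n by (simp add: power2_eq_square)
  finally show ?thesis using measure_pmf.prob_compl[of ?good ?ER] by (simp add: C_def)
qed

lemma degree_constant_bounds:
  fixes a d :: real
  assumes a: "0 < a" "a \<le> 1" and d: "(1024 / a\<^sup>2)\<^sup>2 \<le> d"
  shows "32 / a \<le> d" "2 + ln d \<le> d * a\<^sup>2 / 256"
proof -
  define x where "x = 1024 / a\<^sup>2"
  have a2: "0 < a\<^sup>2" "a\<^sup>2 \<le> 1" using a by (auto simp: power_le_one)
  have x: "1024 \<le> x" "x \<le> x\<^sup>2" "32 / a \<le> x"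
    using a a2 by (auto simp: x_def le_divide_eq divide_le_eq power2_eq_square)
  show "32 / a \<le> d" using x d by (simp add: x_def)
  define s where "s = sqrt d"
  have s: "d = s * s" "x \<le> s" using x d by (auto simp: s_def x_def real_le_rsqrt)
  have "ln d = 2 * ln s" using s x by (simp add: ln_mult)
  moreover have "ln s \<le> s - 1" using s x by (intro ln_le_minus_one) auto
  ultimately have "2 + ln d \<le> s * 1024 / 256" using s(2) x(1) by linarith
  also have "1024 \<le> s * a\<^sup>2" using s(2) a2 by (simp add: x_def divide_le_eq)
  then have "s * 1024 / 256 \<le> s * (s * a\<^sup>2) / 256" using s x by (simp add: mult_left_mono)
  finally show "2 + ln d \<le> d * a\<^sup>2 / 256" using s(1) by (simp add: mult.assoc)
qed

lemma eventually_prob_min_blocks_small: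
  fixes a d q \<beta> :: real
  assumes a: "0 < a" "a \<le> 1" and d: "(1024 / a\<^sup>2)\<^sup>2 \<le> d"
    and q: "(2 + a) * d \<le> q" and \<beta>: "0 \<le> \<beta>" "\<beta> < 1"
  shows "\<forall>\<^sub>F n in sequentially. 1 - 1 / real n \<le> measure_pmf.prob (erdos_renyi n (d / real n))
           {E. \<forall>P. is_path n E P \<longrightarrow> real (card (min_block n E q \<beta> (set P)))
                 \<le> (4 / a + 3) * (real (length P - 1) + ln (real n))}"
proof (rule eventually_mono[OF eventually_ge_at_top[of "max 3 (nat \<lceil>d\<rceil>)"]])
  fix n assume "max 3 (nat \<lceil>d\<rceil>) \<le> n"
  then have "3 \<le> n" "d \<le> real n" by linarith+
  then show "1 - 1 / real n \<le> measure_pmf.prob (erdos_renyi n (d / real n))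
           {E. \<forall>P. is_path n E P \<longrightarrow> real (card (min_block n E q \<beta> (set P)))
                 \<le> (4 / a + 3) * (real (length P - 1) + ln (real n))}"
    using prob_min_blocks_small[OF a degree_constant_bounds[OF a d] q \<beta>] by blast
qed

theorem mainTheorem15:
  fixes \<epsilon> :: real
  assumes "\<epsilon> > 0"
  shows "\<exists>d0. \<forall>d \<ge> d0. \<forall>(q::real) (\<beta>::real).
           q \<ge> (2 + \<epsilon>) * d \<and> 0 \<le> \<beta> \<and> \<beta> < 1 \<longrightarrow>
           (\<exists>C > 0. \<exists>K. \<forall>\<^sub>F n in sequentially.
              measure_pmf.prob (erdos_renyi n (d / real n))
                {E. \<forall>P. is_path n E P \<longrightarrow>
                      real (card (min_block n E q \<beta> (set P)))
                        \<le> C * (real (length P - 1) + ln (real n))}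
              \<ge> 1 - K / real n)"
proof -
  define a where "a = min \<epsilon> 1"
  have a: "0 < a" "a \<le> 1" using assms by (auto simp: a_def)
  have q: "(2 + a) * d \<le> q" if "(1024 / a\<^sup>2)\<^sup>2 \<le> d" "(2 + \<epsilon>) * d \<le> q" for d q :: real
  proof -
    have "0 \<le> d" by (rule order_trans[OF zero_le_power2 that(1)])
    then have "(2 + a) * d \<le> (2 + \<epsilon>) * d" by (intro mult_right_mono) (auto simp: a_def)
    then show ?thesis using that(2) by linarith
  qed
  have "0 < 4 / a + 3" using a by (simp add: add_pos_pos)
  with eventually_prob_min_blocks_small[OF a _ q] show ?thesis by blast
qed

end
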